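(* Let $q$ be a power of $2$, let $b\in\mathbb{F}_q$ with $b\ne0$, and let $n\ge2$ be an integer. Let $r\ge0$ be such that $2^r$ divides $n+1$ but $2^{r+1}$ does not, and let $m\ge0$ be defined by $n+1=2^r(m+1)$. Assume $r\ge1$. If $q>m/2+1$, then there exists $a\in\mathbb{F}_q$ such that $\hat C_n(a,b)$ is LCD.
   Context: For $a,b\in\mathbb{F}_q$ and $n\ge 2$, $\hat T_n(a,b)$ denotes the $n\times n$ symmetric tridiagonal Toeplitz matrix over $\mathbb{F}_q$ with all diagonal entries equal to $a$, all entries on the first super- and sub-diagonals equal to $b$, and all other entries $0$. $\hat C_n(a,b)$ is the $[2n,n]$ linear code over $\mathbb{F}_q$ with generator matrix $[I_n\mid \hat T_n(a,b)]$. A linear code $C$ is LCD if $C\cap C^\perp=\{0\}$ (Euclidean dual). *)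

theory Defs
  imports "Jordan_Normal_Form.Matrix"
begin

definition tridiag_toeplitz :: "nat \<Rightarrow> 'a::field \<Rightarrow> 'a \<Rightarrow> 'a mat" where
  "tridiag_toeplitz n a b = mat n n (\<lambda>(i,j). if i = j then a
       else if i = j + 1 \<or> j = i + 1 then b else 0)"

definition gen_IT :: "nat \<Rightarrow> 'a::field \<Rightarrow> 'a \<Rightarrow> 'a mat" where
  "gen_IT n a b = mat n (2 * n) (\<lambda>(i,j). if j < n then (if i = j then 1 else 0)
       else tridiag_toeplitz n a b $$ (i, j - n))"

text \<open>Linear code generated by G: the row space of G, i.e. all u G for u in F^k.\<close>
definition lin_code :: "'a::field mat \<Rightarrow> 'a vec set" where
  "lin_code G = {mult_mat_vec (transpose_mat G) u | u. u \<in> carrier_vec (dim_row G)}"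

definition dual_code :: "nat \<Rightarrow> 'a::field vec set \<Rightarrow> 'a vec set" where
  "dual_code N C = {y \<in> carrier_vec N. \<forall>x\<in>C. x \<bullet> y = 0}"

definition is_LCD :: "nat \<Rightarrow> 'a::field vec set \<Rightarrow> bool" where
  "is_LCD N C \<longleftrightarrow> C \<inter> dual_code N C = {0\<^sub>v N}"

definition C_hat :: "nat \<Rightarrow> 'a::field \<Rightarrow> 'a \<Rightarrow> 'a vec set" where
  "C_hat n a b = lin_code (gen_IT n a b)"

end

theory Submission
  imports Defs "HOL-Computational_Algebra.Polynomial"
begin

text \<open>
  A word \<open>w = u G\<close> of the code lies in its dual iff \<open>G w = 0\<close>, i.e. \<open>(I + T\<^sup>2) u = 0\<close> since \<open>T\<close>
  is symmetric; in characteristic 2 this matrix is \<open>(T + I)\<^sup>2 = T\<^sub>n(a + 1, b)\<^sup>2\<close>.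
  A kernel vector of \<open>T\<^sub>n(c, b)\<close>, padded by zeros, follows the Lucas recurrence
  \<open>U\<^sub>k\<^sub>+\<^sub>2 = x U\<^sub>k\<^sub>+\<^sub>1 - U\<^sub>k\<close> at \<open>x = -c/b\<close>, so it vanishes unless \<open>U\<^sub>n\<^sub>+\<^sub>1(x) = 0\<close>.
  In characteristic 2, \<open>U\<^sub>2\<^sub>k = x U\<^sub>k\<^sup>2\<close> and \<open>U\<^sub>2\<^sub>k\<^sub>+\<^sub>1 = (U\<^sub>k\<^sub>+\<^sub>1 + U\<^sub>k)\<^sup>2\<close>; as \<open>m + 1\<close>
  is odd, \<open>m = 2j\<close> and every root of \<open>U\<^sub>n\<^sub>+\<^sub>1 = U\<^bsub>2\<^sup>r(2j+1)\<^esub>\<close> is \<open>0\<close> or a root of the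
  degree-\<open>j\<close> polynomial \<open>U\<^sub>j\<^sub>+\<^sub>1 + U\<^sub>j\<close>. Since \<open>q > j + 1\<close> some \<open>x\<close> is not a root,
  and \<open>a = -b x - 1\<close> gives an LCD code.
\<close>

fun lucas :: "'a::comm_ring_1 \<Rightarrow> nat \<Rightarrow> 'a" where
  "lucas x 0 = 0"
| "lucas x (Suc 0) = 1"
| "lucas x (Suc (Suc k)) = x * lucas x (Suc k) - lucas x k"

lemma lucas_add:
  "lucas x (m + n + 1) = lucas x (m + 1) * lucas x (n + 1) - lucas x m * lucas x n"
proof (induction x n rule: lucas.induct)
  case (3 x k)
  have "lucas x (m + Suc (Suc k) + 1) = x * lucas x (m + Suc k + 1) - lucas x (m + k + 1)"
    by simp
  also have "\<dots> = lucas x (m + 1) * (x * lucas x (Suc k + 1) - lucas x (k + 1))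
                   - lucas x m * (x * lucas x (k + 1) - lucas x k)"
    unfolding "3" by (simp del: lucas.simps add: algebra_simps)
  also have "\<dots> = lucas x (m + 1) * lucas x (Suc (Suc k) + 1) - lucas x m * lucas x (Suc (Suc k))"
    by (simp only: Suc_eq_plus1 [symmetric] lucas.simps)
  finally show ?case .
qed simp_all

lemma lucas_double_char2:
  fixes x :: "'a::comm_ring_1"
  assumes "(2::'a) = 0"
  shows "lucas x (2 * k) = x * lucas x k ^ 2"
proof (cases k)
  case (Suc l)
  have "lucas x (2 * k) = lucas x (k + l + 1)"
    using Suc by (simp add: mult_2)
  also have "\<dots> = x * lucas x k ^ 2 - 2 * lucas x l * lucas x k"
    using lucas_add[of x k l] Suc by (simp add: power2_eq_square algebra_simps)
  finally show ?thesis
    using assms by simp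
qed simp

lemma lucas_double_Suc_char2:
  fixes x :: "'a::comm_ring_1"
  assumes "(2::'a) = 0"
  shows "lucas x (2 * k + 1) = (lucas x (k + 1) + lucas x k) ^ 2"
proof -
  have "lucas x (2 * k + 1) = lucas x (k + 1) ^ 2 - lucas x k ^ 2"
    using lucas_add[of x k k] by (simp add: mult_2 power2_eq_square)
  also have "\<dots> = (lucas x (k + 1) + lucas x k) ^ 2 - 2 * ((lucas x (k + 1) + lucas x k) * lucas x k)"
    by (simp add: power2_eq_square algebra_simps)
  finally show ?thesis
    using assms by simp
qed

lemma lucas_pow2_mult_eq_0_char2:
  fixes y :: "'a::idom"
  assumes "(2::'a) = 0" and "lucas y (2 ^ r * M) = 0"
  shows "y = 0 \<or> lucas y M = 0"
  using assms(2)
proof (induction r)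
  case (Suc r)
  then have "y * lucas y (2 ^ r * M) ^ 2 = 0"
    using lucas_double_char2[OF assms(1), of y "2 ^ r * M"] by (simp add: mult.assoc)
  then show ?case
    using Suc.IH by auto
qed simp

lemma lucas_recurrence_solution:
  fixes s :: "nat \<Rightarrow> 'a::comm_ring_1"
  assumes "s 0 = 0" and rec: "\<And>i. i < n \<Longrightarrow> s (i + 2) = x * s (i + 1) - s i"
  shows "i \<le> n + 1 \<Longrightarrow> s i = s 1 * lucas x i"
proof (induction i rule: induct_nat_012)
  case (ge2 i)
  then have "s (Suc (Suc i)) = x * s (Suc i) - s i"
    using rec[of i] by simp
  then show ?case
    using ge2 by (simp add: algebra_simps)
qed (simp_all add: assms(1))

lemma poly_lucas: "poly (lucas [:0, 1:] k) y = lucas y k"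
  by (induction "[:0, 1::'a::comm_ring_1:]" k rule: lucas.induct) simp_all

lemma lucas_X_Suc_monic:
  "degree (lucas [:0, 1:] (Suc k) :: 'a::comm_ring_1 poly) = k
   \<and> coeff (lucas [:0, 1:] (Suc k) :: 'a poly) k = 1"
proof (induction k rule: less_induct)
  case (less k)
  show ?case
  proof (cases k)
    case (Suc l)
    define p :: "'a poly" where "p = [:0, 1:] * lucas [:0, 1:] (Suc l)"
    define q :: "'a poly" where "q = - lucas [:0, 1:] l"
    have p: "degree p = k" "coeff p k = 1"
      using less[of l] Suc unfolding p_def by (auto simp: degree_pCons_eq)
    have q: "degree q < k"
      using less[of "l - 1"] Suc unfolding q_def by (cases l) auto
    have "lucas [:0, 1:] (Suc k) = p + q"
      using Suc unfolding p_def q_def by simp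
    moreover have "degree (p + q) = k"
      using p q by (simp add: degree_add_eq_left)
    moreover have "coeff q k = 0"
      using q by (simp add: coeff_eq_0)
    ultimately show ?thesis
      using p(2) by (simp del: lucas.simps)
  qed simp
qed

lemma card_lucas_roots_char2:
  assumes "(2::'a::idom) = 0"
  shows "card {y::'a. lucas y (2 ^ r * (2 * j + 1)) = 0} \<le> j + 1"
proof -
  define P :: "'a poly" where "P = lucas [:0, 1:] (j + 1) + lucas [:0, 1:] j"
  have lower: "degree (lucas [:0, 1:] j :: 'a poly) < j \<or> j = 0"
    using lucas_X_Suc_monic[of "j - 1", where 'a='a] by (cases j) auto
  then have "coeff (lucas [:0, 1:] j :: 'a poly) j = 0"
    by (auto simp: coeff_eq_0)
  then have "coeff P j = 1"
    using lucas_X_Suc_monic[of j, where 'a='a] unfolding P_def by simp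
  then have P_nonzero: "P \<noteq> 0"
    by auto
  have P_degree: "degree P \<le> j"
    using lucas_X_Suc_monic[of j, where 'a='a] lower unfolding P_def by (auto intro: degree_add_le)
  have roots_subset: "{y. lucas y (2 ^ r * (2 * j + 1)) = 0} \<subseteq> insert 0 {y. poly P y = 0}"
  proof
    fix y :: 'a
    assume "y \<in> {y. lucas y (2 ^ r * (2 * j + 1)) = 0}"
    then have "y = 0 \<or> lucas y (2 * j + 1) = 0"
      using lucas_pow2_mult_eq_0_char2[OF assms] by blast
    moreover have "lucas y (2 * j + 1) = poly P y ^ 2"
      unfolding P_def using lucas_double_Suc_char2[OF assms] by (simp add: poly_lucas)
    ultimately show "y \<in> insert 0 {y. poly P y = 0}"
      by simp
  qed
  have "finite (insert 0 {y. poly P y = 0})"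
    using poly_roots_finite[OF P_nonzero] by simp
  then have "card {y::'a. lucas y (2 ^ r * (2 * j + 1)) = 0} \<le> card (insert 0 {y. poly P y = 0})"
    using roots_subset by (rule card_mono)
  also have "\<dots> \<le> card {y. poly P y = 0} + 1"
    using card_insert_le_m1 by (simp add: card_insert_if poly_roots_finite[OF P_nonzero])
  also have "\<dots> \<le> j + 1"
    using card_poly_roots_bound[OF P_nonzero] P_degree by simp
  finally show ?thesis .
qed

lemma of_nat_card_UNIV_eq_0: "of_nat (card (UNIV :: 'a::{ring_1,finite} set)) = (0::'a)"
proof -
  have "(\<Sum>y\<in>UNIV. y) = (\<Sum>y\<in>UNIV. y + (1::'a))"
    by (rule sum.reindex_bij_witness[of _ "\<lambda>y. y + 1" "\<lambda>y. y - 1"]) auto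
  then show ?thesis
    by (simp add: sum.distrib)
qed

lemma char2_if_card_UNIV_power_of_two:
  assumes "card (UNIV :: 'a::{idom,finite} set) = 2 ^ k"
  shows "(2::'a) = 0"
proof -
  have "(2::'a) ^ k = 0"
    using of_nat_card_UNIV_eq_0[where 'a='a] assms by simp
  then show ?thesis
    by simp
qed

lemma ex_lucas_nonroot_char2:
  assumes "(2::'a::{idom,finite}) = 0" and "card (UNIV :: 'a set) > j + 1"
  shows "\<exists>x::'a. lucas x (2 ^ r * (2 * j + 1)) \<noteq> 0"
proof -
  have "card {y::'a. lucas y (2 ^ r * (2 * j + 1)) = 0} < card (UNIV :: 'a set)"
    using card_lucas_roots_char2[OF assms(1), of r j] assms(2) by simp
  then have "{y::'a. lucas y (2 ^ r * (2 * j + 1)) = 0} \<noteq> UNIV"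
    by auto
  then show ?thesis
    by blast
qed

lemma dim_tridiag_toeplitz [simp]:
  "dim_row (tridiag_toeplitz n a b) = n" "dim_col (tridiag_toeplitz n a b) = n"
  by (simp_all add: tridiag_toeplitz_def)

lemma tridiag_toeplitz_carrier [simp]: "tridiag_toeplitz n a b \<in> carrier_mat n n"
  by (simp add: carrier_matI)

lemma tridiag_toeplitz_index:
  "i < n \<Longrightarrow> j < n \<Longrightarrow>
   tridiag_toeplitz n a b $$ (i, j) = (if i = j then a else if i = j + 1 \<or> j = i + 1 then b else 0)"
  by (simp add: tridiag_toeplitz_def)

lemma tridiag_toeplitz_add_one: "tridiag_toeplitz n (a + 1) b = tridiag_toeplitz n a b + 1\<^sub>m n"
  by (rule eq_matI) (auto simp: tridiag_toeplitz_index)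

lemma tridiag_toeplitz_mult_vec_index:
  fixes a b :: "'a::field"
  assumes "i < n" and "u \<in> carrier_vec n"
  shows "(tridiag_toeplitz n a b *\<^sub>v u) $ i =
    (if 0 < i then b * u $ (i - 1) else 0) + a * u $ i + (if i + 1 < n then b * u $ (i + 1) else 0)"
proof -
  have "(tridiag_toeplitz n a b *\<^sub>v u) $ i = (\<Sum>k<n. tridiag_toeplitz n a b $$ (i, k) * u $ k)"
    using assms by (simp add: scalar_prod_def lessThan_atLeast0 carrier_vecD)
  also have "\<dots> = (\<Sum>k<n. (if k + 1 = i then b * u $ k else 0) + (if k = i then a * u $ k else 0)
                            + (if k = i + 1 then b * u $ k else 0))"
    using assms(1) by (intro sum.cong) (auto simp: tridiag_toeplitz_index)
  also have "\<dots> = (if 0 < i then b * u $ (i - 1) else 0) + a * u $ i + (if i + 1 < n then b * u $ (i + 1) else 0)"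
    using assms(1) by (cases i) (simp_all add: sum.distrib sum.delta')
  finally show ?thesis .
qed

lemma tridiag_toeplitz_kernel_trivial:
  fixes a b :: "'a::field"
  assumes b: "b \<noteq> 0" and nonroot: "lucas (- a / b) (n + 1) \<noteq> 0"
    and u: "u \<in> carrier_vec n" and ker: "tridiag_toeplitz n a b *\<^sub>v u = 0\<^sub>v n"
  shows "u = 0\<^sub>v n"
proof -
  \<comment> \<open>\<open>u\<close> shifted by one and padded with zeros: each row of \<open>T u = 0\<close> is one step of the recurrence\<close>
  define s where "s i = (if 0 < i \<and> i \<le> n then u $ (i - 1) else 0)" for i
  have "s (i + 2) = - a / b * s (i + 1) - s i" if i: "i < n" for i
  proof -
    have "(tridiag_toeplitz n a b *\<^sub>v u) $ i = 0"
      using ker i by (metis index_zero_vec(1))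
    then have "b * s i + a * s (i + 1) + b * s (i + 2) = 0"
      using i unfolding tridiag_toeplitz_mult_vec_index[OF i u] s_def by auto
    then show ?thesis
      using b by (simp add: field_simps eq_neg_iff_add_eq_0 ac_simps)
  qed
  then have s_lucas: "s i = s 1 * lucas (- a / b) i" if "i \<le> n + 1" for i
    using lucas_recurrence_solution[of s n] that by (simp add: s_def)
  have "s 1 = 0"
    using s_lucas[of "n + 1"] nonroot by (simp add: s_def)
  show ?thesis
  proof (rule eq_vecI)
    fix i
    assume "i < dim_vec (0\<^sub>v n :: 'a vec)"
    then show "u $ i = 0\<^sub>v n $ i"
      using s_lucas[of "i + 1"] \<open>s 1 = 0\<close> by (simp add: s_def)
  qed (use u in simp)
qed

lemma char2_square_add_one_mat:
  fixes A :: "'a::comm_ring_1 mat"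
  assumes "(2::'a) = 0" and A: "A \<in> carrier_mat n n"
  shows "(A + 1\<^sub>m n) * (A + 1\<^sub>m n) = A * A + 1\<^sub>m n"
proof -
  have "A + A = 0\<^sub>m n n"
    using A assms(1) by (intro eq_matI) (auto simp flip: mult_2)
  have "(A + 1\<^sub>m n) * (A + 1\<^sub>m n) = (A + 1\<^sub>m n) * A + (A + 1\<^sub>m n)"
    using A by (simp add: mult_add_distrib_mat[of _ n n A n "1\<^sub>m n"])
  also have "\<dots> = A * A + (A + A) + 1\<^sub>m n"
    using A by (simp add: add_mult_distrib_mat[of A n n "1\<^sub>m n" A n] assoc_add_mat[of _ n n])
  finally show ?thesis
    using A \<open>A + A = 0\<^sub>m n n\<close> by simp
qed

lemma sum_atLeastLessThan_double:
  fixes f :: "nat \<Rightarrow> 'a::comm_monoid_add"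
  shows "(\<Sum>k\<in>{0..<2 * n}. f k) = (\<Sum>k\<in>{0..<n}. f k) + (\<Sum>k\<in>{0..<n}. f (n + k))"
proof -
  have "(\<Sum>k\<in>{0..<2 * n}. f k) = (\<Sum>k\<in>{0..<n}. f k) + (\<Sum>k\<in>{n..<2 * n}. f k)"
    by (rule sum.atLeastLessThan_concat[symmetric]) auto
  also have "(\<Sum>k\<in>{n..<2 * n}. f k) = (\<Sum>k\<in>{0..<n}. f (n + k))"
    using sum.shift_bounds_nat_ivl[of f 0 n n] by (simp add: mult_2 add.commute)
  finally show ?thesis .
qed

lemma dim_gen_IT [simp]: "dim_row (gen_IT n a b) = n" "dim_col (gen_IT n a b) = 2 * n"
  by (simp_all add: gen_IT_def)

lemma gen_IT_index:
  assumes "i < n" and "k < n"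
  shows "gen_IT n a b $$ (i, k) = (if i = k then 1 else 0)"
    and "gen_IT n a b $$ (i, n + k) = tridiag_toeplitz n a b $$ (i, k)"
  using assms by (simp_all add: gen_IT_def)

lemma gen_IT_carrier: "gen_IT n a b \<in> carrier_mat n (2 * n)"
  by (simp add: carrier_matI)

lemma gen_IT_gram:
  "gen_IT n a b * transpose_mat (gen_IT n a b) = 1\<^sub>m n + tridiag_toeplitz n a b * tridiag_toeplitz n a b"
proof (rule eq_matI)
  fix i j
  assume "i < dim_row (1\<^sub>m n + tridiag_toeplitz n a b * tridiag_toeplitz n a b)"
    and "j < dim_col (1\<^sub>m n + tridiag_toeplitz n a b * tridiag_toeplitz n a b)"
  then have i: "i < n" and j: "j < n"
    by auto
  let ?G = "gen_IT n a b" and ?T = "tridiag_toeplitz n a b"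
  have "(?G * transpose_mat ?G) $$ (i, j) = (\<Sum>k\<in>{0..<2 * n}. ?G $$ (i, k) * ?G $$ (j, k))"
    using i j by (simp add: scalar_prod_def)
  also have "\<dots> = (\<Sum>k\<in>{0..<n}. ?G $$ (i, k) * ?G $$ (j, k)) + (\<Sum>k\<in>{0..<n}. ?G $$ (i, n + k) * ?G $$ (j, n + k))"
    by (rule sum_atLeastLessThan_double)
  also have "\<dots> = (\<Sum>k\<in>{0..<n}. if k = i then (if j = k then 1 else 0) else 0) + (\<Sum>k\<in>{0..<n}. ?T $$ (i, k) * ?T $$ (k, j))"
    using i j by (intro arg_cong2[where f = "(+)"] sum.cong) (auto simp: gen_IT_index tridiag_toeplitz_index)
  also have "\<dots> = (1\<^sub>m n + ?T * ?T) $$ (i, j)"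
    using i j by (simp add: scalar_prod_def)
  finally show "(?G * transpose_mat ?G) $$ (i, j) = (1\<^sub>m n + ?T * ?T) $$ (i, j)" .
qed simp_all

lemma gen_IT_gram_char2:
  fixes a b :: "'a::field"
  assumes "(2::'a) = 0"
  shows "gen_IT n a b * transpose_mat (gen_IT n a b) = tridiag_toeplitz n (a + 1) b * tridiag_toeplitz n (a + 1) b"
proof -
  let ?T = "tridiag_toeplitz n a b"
  have "1\<^sub>m n + ?T * ?T = ?T * ?T + 1\<^sub>m n"
    by (rule comm_add_mat[OF one_carrier_mat mult_carrier_mat[OF tridiag_toeplitz_carrier tridiag_toeplitz_carrier]])
  then show ?thesis
    using char2_square_add_one_mat[OF assms tridiag_toeplitz_carrier[of n a b]]
    by (simp add: gen_IT_gram tridiag_toeplitz_add_one)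
qed

lemma row_in_lin_code:
  assumes "G \<in> carrier_mat k N" and "i < k"
  shows "row G i \<in> lin_code G"
proof -
  have "row G i = transpose_mat G *\<^sub>v unit_vec k i"
    using assms by (intro eq_vecI) auto
  then show ?thesis
    using assms unfolding lin_code_def by auto
qed

lemma is_LCD_lin_code_if_gram_injective:
  fixes G :: "'a::field mat"
  assumes G: "G \<in> carrier_mat k N"
    and gram: "\<And>u. u \<in> carrier_vec k \<Longrightarrow> (G * transpose_mat G) *\<^sub>v u = 0\<^sub>v k \<Longrightarrow> u = 0\<^sub>v k"
  shows "is_LCD N (lin_code G)"
  unfolding is_LCD_def
proof (intro equalityI subsetI)
  fix w
  assume w: "w \<in> lin_code G \<inter> dual_code N (lin_code G)"
  then obtain u where u: "u \<in> carrier_vec k" and w_def: "w = transpose_mat G *\<^sub>v u"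
    using G unfolding lin_code_def by auto
  have "G *\<^sub>v w = 0\<^sub>v k"
  proof (rule eq_vecI)
    fix i
    assume "i < dim_vec (0\<^sub>v k :: 'a vec)"
    then have "row G i \<bullet> w = 0"
      using w row_in_lin_code[OF G] unfolding dual_code_def by auto
    then show "(G *\<^sub>v w) $ i = 0\<^sub>v k $ i"
      using \<open>i < dim_vec (0\<^sub>v k)\<close> G by simp
  qed (use G in simp)
  then have "(G * transpose_mat G) *\<^sub>v u = 0\<^sub>v k"
    using G u w_def by (simp add: assoc_mult_mat_vec[of G k N "transpose_mat G" k u])
  then show "w \<in> {0\<^sub>v N}"
    using gram[OF u] G w_def by auto
next
  fix w :: "'a vec"
  assume "w \<in> {0\<^sub>v N}"
  then have w: "w = 0\<^sub>v N"
    by simp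
  have "0\<^sub>v N = transpose_mat G *\<^sub>v 0\<^sub>v k"
    using G by (intro eq_vecI) auto
  then have "w \<in> lin_code G"
    using G w unfolding lin_code_def by auto
  moreover have "x \<bullet> w = 0" if "x \<in> lin_code G" for x
  proof -
    have "x \<in> carrier_vec N"
      using that G unfolding lin_code_def by auto
    then show ?thesis
      using w by simp
  qed
  ultimately show "w \<in> lin_code G \<inter> dual_code N (lin_code G)"
    using w unfolding dual_code_def by auto
qed

lemma is_LCD_C_hat_char2:
  fixes a b :: "'a::field"
  assumes "(2::'a) = 0" and b: "b \<noteq> 0" and nonroot: "lucas (- (a + 1) / b) (n + 1) \<noteq> 0"
  shows "is_LCD (2 * n) (C_hat n a b)"
  unfolding C_hat_def
proof (rule is_LCD_lin_code_if_gram_injective[OF gen_IT_carrier])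
  let ?T = "tridiag_toeplitz n (a + 1) b"
  fix u :: "'a vec"
  assume u: "u \<in> carrier_vec n"
    and "(gen_IT n a b * transpose_mat (gen_IT n a b)) *\<^sub>v u = 0\<^sub>v n"
  then have "?T *\<^sub>v (?T *\<^sub>v u) = 0\<^sub>v n"
    by (simp add: gen_IT_gram_char2[OF assms(1)] assoc_mult_mat_vec[of ?T n n ?T n u])
  moreover have "?T *\<^sub>v u \<in> carrier_vec n"
    using u by (simp add: mult_mat_vec_carrier[OF tridiag_toeplitz_carrier])
  ultimately have "?T *\<^sub>v u = 0\<^sub>v n"
    using tridiag_toeplitz_kernel_trivial[OF b nonroot] by blast
  then show "u = 0\<^sub>v n"
    using tridiag_toeplitz_kernel_trivial[OF b nonroot u] by simp
qed

theorem corollary2p5: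
  fixes b :: "'a::{field,finite}" and n r m :: nat
  assumes "\<exists>k. card (UNIV :: 'a set) = 2 ^ k"
    and "b \<noteq> 0"
    and "n \<ge> 2"
    and "2 ^ r dvd n + 1" and "\<not> 2 ^ (r + 1) dvd n + 1"
    and "n + 1 = 2 ^ r * (m + 1)"
    and "r \<ge> 1"
    and "real (card (UNIV :: 'a set)) > real m / 2 + 1"
  shows "\<exists>a::'a. is_LCD (2 * n) (C_hat n a b)"
proof -
  have two: "(2::'a) = 0"
    using assms(1) char2_if_card_UNIV_power_of_two by blast
  have "odd (m + 1)"
  proof
    assume "even (m + 1)"
    then obtain t where "m + 1 = 2 * t"
      by blast
    then have "n + 1 = 2 ^ (r + 1) * t"
      using assms(6) by simp
    with assms(5) show False
      by simp
  qed
  then obtain j where j: "m = 2 * j"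
    by (auto elim!: evenE)
  obtain x :: 'a where "lucas x (n + 1) \<noteq> 0"
    using ex_lucas_nonroot_char2[OF two, of j r] assms(6,8) j by auto
  then have "is_LCD (2 * n) (C_hat n (- (b * x) - 1) b)"
    using assms(2) by (intro is_LCD_C_hat_char2[OF two]) simp_all
  then show ?thesis ..
qed

end
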